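(* Let $(Q,\cdot,e)$ be a double Ward quasigroup of finite order $n$ which is $k$-translatable (with respect to some ordering of $Q$ as $1,2,\ldots,n$), where $1\le k<n$. Then $k=n-1$ and $(Q,\cdot,e)$ is induced by a cyclic group, i.e. the group $(Q,\diamond)$ with $x\diamond y=(e\cdot x)\cdot(e\cdot y)$ is cyclic.
   Context: A double Ward quasigroup $(Q,\cdot,e)$ is a quasigroup (a magma in which $ax=b$, $ya=b$ have unique solutions) with an element $e$ such that $(ee\cdot xz)(ey\cdot z)=xy$ for all $x,y,z$; the operation $x\diamond y=(ex)(ey)$ makes $Q$ a group with identity $e$, and $xy=x^{-1}\diamond y^{-1}$. With $Q=\{1,\ldots,n\}$ ordered naturally and $[i]_n$ denoting $i$ modulo $n$ (with $0$ identified with $n$), a magma $(Q,\cdot)$ is $k$-translatable ($1\le k<n$) if $i\cdot j=[i+1]_n\cdot[j+k]_n$ for all $i,j\in Q$; equivalently each row of the multiplication table is obtained from the previous one by moving its last $k$ entries to the front. *)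

theory Defs
  imports "HOL-Algebra.Elementary_Groups"
begin

text \<open>Q = {1..n}. [i]_n : i modulo n, with 0 identified with n.\<close>
definition modn :: "nat \<Rightarrow> nat \<Rightarrow> nat" where
  "modn n i = (if i mod n = 0 then n else i mod n)"

definition quasigroup_on :: "'a set \<Rightarrow> ('a \<Rightarrow> 'a \<Rightarrow> 'a) \<Rightarrow> bool" where
  "quasigroup_on Q f \<longleftrightarrow>
     (\<forall>x\<in>Q. \<forall>y\<in>Q. f x y \<in> Q) \<and>
     (\<forall>a\<in>Q. \<forall>b\<in>Q. \<exists>!x. x \<in> Q \<and> f a x = b) \<and>
     (\<forall>a\<in>Q. \<forall>b\<in>Q. \<exists>!y. y \<in> Q \<and> f y a = b)"

definition double_ward :: "'a set \<Rightarrow> ('a \<Rightarrow> 'a \<Rightarrow> 'a) \<Rightarrow> 'a \<Rightarrow> bool" where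
  "double_ward Q f e \<longleftrightarrow> quasigroup_on Q f \<and> e \<in> Q \<and>
     (\<forall>x\<in>Q. \<forall>y\<in>Q. \<forall>z\<in>Q. f (f (f e e) (f x z)) (f (f e y) z) = f x y)"

definition translatable :: "nat \<Rightarrow> (nat \<Rightarrow> nat \<Rightarrow> nat) \<Rightarrow> nat \<Rightarrow> bool" where
  "translatable n f k \<longleftrightarrow>
     (\<forall>i\<in>{1..n}. \<forall>j\<in>{1..n}. f i j = f (modn n (i + 1)) (modn n (j + k)))"

definition diamond_group :: "'a set \<Rightarrow> ('a \<Rightarrow> 'a \<Rightarrow> 'a) \<Rightarrow> 'a \<Rightarrow> 'a monoid" where
  "diamond_group Q f e = \<lparr>carrier = Q, monoid.mult = (\<lambda>x y. f (f e x) (f e y)), one = e\<rparr>"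

end

(* The Ward identity first forces e e = e, and then (e z) z = e, (e w) e = w and e (e z) = z.
   So x |-> e x is an involution, z e = e z, the diamond product is a group with inverse
   x |-> e x, and x y = x^-1 <> y^-1; in particular e (a b) = (e b) (e a).  If y + k = e
   (mod n), translatability gives e y = (e + 1) e = e (e + 1), so y = e + 1 and k = n - 1;
   then translatability reads (i + 1) j = i (j + 1).  For g = e + 1 this makes right
   multiplication by g in the group the cyclic shift x |-> x + 1 (mod n), so the powers of g
   run through all of Q. *)
theory Submission
  imports Defs "HOL-Number_Theory.Cong"
begin

lemma diamond_group_simps [simp]:
  "carrier (diamond_group Q f e) = Q" "\<one>\<^bsub>diamond_group Q f e\<^esub> = e"
  "x \<otimes>\<^bsub>diamond_group Q f e\<^esub> y = f (f e x) (f e y)"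
  by (simp_all add: diamond_group_def)

locale quasigroup =
  fixes Q :: "'a set" and mult :: "'a \<Rightarrow> 'a \<Rightarrow> 'a"  (infixl \<open>\<cdot>\<close> 70)
  assumes closed: "x \<in> Q \<Longrightarrow> y \<in> Q \<Longrightarrow> x \<cdot> y \<in> Q"
    and left_division: "a \<in> Q \<Longrightarrow> b \<in> Q \<Longrightarrow> \<exists>!x. x \<in> Q \<and> a \<cdot> x = b"
    and right_division: "a \<in> Q \<Longrightarrow> b \<in> Q \<Longrightarrow> \<exists>!y. y \<in> Q \<and> y \<cdot> a = b"

lemma quasigroupI: "quasigroup_on Q f \<Longrightarrow> quasigroup Q f"
  unfolding quasigroup_on_def by unfold_locales simp_all

context quasigroup
begin

lemma left_divisible: "a \<in> Q \<Longrightarrow> b \<in> Q \<Longrightarrow> \<exists>x\<in>Q. a \<cdot> x = b"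
  using left_division by blast

lemma right_divisible: "a \<in> Q \<Longrightarrow> b \<in> Q \<Longrightarrow> \<exists>y\<in>Q. y \<cdot> a = b"
  using right_division by blast

lemma left_cancel: "a \<in> Q \<Longrightarrow> x \<in> Q \<Longrightarrow> y \<in> Q \<Longrightarrow> a \<cdot> x = a \<cdot> y \<Longrightarrow> x = y"
  using left_division[of a "a \<cdot> x"] closed by (metis (no_types, lifting))

lemma right_cancel: "a \<in> Q \<Longrightarrow> x \<in> Q \<Longrightarrow> y \<in> Q \<Longrightarrow> x \<cdot> a = y \<cdot> a \<Longrightarrow> x = y"
  using right_division[of a "x \<cdot> a"] closed by (metis (no_types, lifting))

end

locale double_ward_quasigroup = quasigroup +
  fixes e :: 'a
  assumes unit_closed: "e \<in> Q"
    and ward: "\<And>x y z. x \<in> Q \<Longrightarrow> y \<in> Q \<Longrightarrow> z \<in> Q \<Longrightarrow> (e \<cdot> e) \<cdot> (x \<cdot> z) \<cdot> ((e \<cdot> y) \<cdot> z) = x \<cdot> y"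

lemma double_ward_quasigroupI: "double_ward Q f e \<Longrightarrow> double_ward_quasigroup Q f e"
  unfolding double_ward_def double_ward_quasigroup_def double_ward_quasigroup_axioms_def
  using quasigroupI by blast

context double_ward_quasigroup
begin

lemma ward_right_quotient: "w \<in> Q \<Longrightarrow> z \<in> Q \<Longrightarrow> (e \<cdot> e) \<cdot> w \<cdot> ((e \<cdot> z) \<cdot> z) = w"
  using right_divisible[of z w] ward[of _ z z] by force

lemma right_quotient_const: "z \<in> Q \<Longrightarrow> (e \<cdot> z) \<cdot> z = (e \<cdot> e) \<cdot> e"
  using left_cancel[of "(e \<cdot> e) \<cdot> e"] ward_right_quotient[of e] closed unit_closed by metis

lemma ward_right_inverse: "w \<in> Q \<Longrightarrow> (e \<cdot> e) \<cdot> w \<cdot> ((e \<cdot> e) \<cdot> e) = w"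
  by (simp add: ward_right_quotient unit_closed)

lemma unit_idem [simp]: "e \<cdot> e = e"
proof -
  let ?u = "e \<cdot> e" and ?c = "(e \<cdot> e) \<cdot> e"
  have Q: "?u \<in> Q" "?c \<in> Q" using closed unit_closed by blast+
  have u_c: "?u \<cdot> (w \<cdot> ?c) = w" if w: "w \<in> Q" for w
  proof -
    obtain q where q: "q \<in> Q" "?u \<cdot> q = w" using left_divisible[OF Q(1) w] by blast
    have "w \<cdot> ?c = q" using ward_right_inverse[OF q(1)] unfolding q(2) .
    then show ?thesis using q(2) by simp
  qed
  have e_c: "e \<cdot> y \<cdot> ?c = y" if y: "y \<in> Q" for y
  proof (rule left_cancel[OF unit_closed closed[OF closed[OF unit_closed y] Q(2)] y])
    have "?u \<cdot> (e \<cdot> ?c) \<cdot> (e \<cdot> y \<cdot> ?c) = e \<cdot> y" using ward[OF unit_closed y Q(2)] .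
    then show "e \<cdot> (e \<cdot> y \<cdot> ?c) = e \<cdot> y" unfolding u_c[OF unit_closed] .
  qed
  have "e \<cdot> e \<cdot> ?c = ?u \<cdot> e \<cdot> ?c"
    unfolding e_c[OF unit_closed] ward_right_inverse[OF unit_closed] ..
  then have "e \<cdot> e = ?u \<cdot> e" by (rule right_cancel[OF Q(2) Q(1) closed[OF Q(1) unit_closed]])
  then have "e = ?u" by (rule right_cancel[OF unit_closed unit_closed Q(1)])
  then show ?thesis by (rule sym)
qed

lemma ward_unit: "x \<in> Q \<Longrightarrow> y \<in> Q \<Longrightarrow> z \<in> Q \<Longrightarrow> e \<cdot> (x \<cdot> z) \<cdot> ((e \<cdot> y) \<cdot> z) = x \<cdot> y"
  using ward by simp

lemma right_quotient_unit: "z \<in> Q \<Longrightarrow> (e \<cdot> z) \<cdot> z = e"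
  using right_quotient_const by simp

lemma unit_mult_mult_unit: "w \<in> Q \<Longrightarrow> (e \<cdot> w) \<cdot> e = w"
  using ward_right_inverse by simp

lemma unit_involution:
  assumes "z \<in> Q"
  shows "e \<cdot> (e \<cdot> z) = z"
proof -
  have "e \<cdot> ((e \<cdot> z) \<cdot> z) \<cdot> ((e \<cdot> e) \<cdot> z) = (e \<cdot> z) \<cdot> e"
    using ward_unit closed unit_closed assms by blast
  then show ?thesis using right_quotient_unit unit_mult_mult_unit assms by simp
qed

lemma mult_unit_commute: "z \<in> Q \<Longrightarrow> z \<cdot> e = e \<cdot> z"
  using unit_mult_mult_unit[of "e \<cdot> z"] unit_involution closed unit_closed by simp

abbreviation diamond :: "'a monoid" where
  "diamond \<equiv> diamond_group Q (\<cdot>) e"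

lemma diamond_assoc:
  assumes "a \<in> Q" "b \<in> Q" "c \<in> Q"
  shows "e \<cdot> ((e \<cdot> a) \<cdot> (e \<cdot> b)) \<cdot> (e \<cdot> c) = (e \<cdot> a) \<cdot> (e \<cdot> ((e \<cdot> b) \<cdot> (e \<cdot> c)))"
proof -
  have Q: "e \<cdot> a \<in> Q" "e \<cdot> b \<in> Q" "e \<cdot> c \<in> Q" using assms closed unit_closed by auto
  obtain t where t: "t \<in> Q" "t \<cdot> (e \<cdot> b) = e \<cdot> c" using right_divisible Q by blast
  define y where "y = e \<cdot> t"
  have y: "y \<in> Q" "e \<cdot> y = t" using t closed unit_closed unit_involution unfolding y_def by auto
  have "e \<cdot> ((e \<cdot> a) \<cdot> (e \<cdot> b)) \<cdot> (e \<cdot> c) = (e \<cdot> a) \<cdot> y"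
    using ward_unit[of "e \<cdot> a" y "e \<cdot> b"] Q y t by simp
  moreover have "(e \<cdot> b) \<cdot> (e \<cdot> c) = e \<cdot> y"
    using ward_unit[of e y "e \<cdot> b"] unit_involution unit_closed Q y t by simp
  then have "e \<cdot> ((e \<cdot> b) \<cdot> (e \<cdot> c)) = y" using unit_involution[OF y(1)] by simp
  ultimately show ?thesis by simp
qed

lemma group_diamond: "group diamond"
proof (rule groupI)
  fix x assume "x \<in> carrier diamond"
  then show "\<exists>y\<in>carrier diamond. y \<otimes>\<^bsub>diamond\<^esub> x = \<one>\<^bsub>diamond\<^esub>"
    using right_quotient_unit[of "e \<cdot> x"] closed unit_closed
    by (intro bexI[of _ "e \<cdot> x"]) (simp_all add: unit_involution)
qed (simp_all add: closed unit_closed unit_involution diamond_assoc)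

lemma diamond_inv: "x \<in> Q \<Longrightarrow> inv\<^bsub>diamond\<^esub> x = e \<cdot> x"
  using group.inv_equality[OF group_diamond, of "e \<cdot> x" x]
    right_quotient_unit[of "e \<cdot> x"] closed unit_closed by simp

lemma mult_eq_diamond_inv: "x \<in> Q \<Longrightarrow> y \<in> Q \<Longrightarrow> x \<cdot> y = inv\<^bsub>diamond\<^esub> x \<otimes>\<^bsub>diamond\<^esub> inv\<^bsub>diamond\<^esub> y"
  by (simp add: diamond_inv closed unit_closed unit_involution)

lemma unit_mult_antihom:
  assumes "a \<in> Q" "b \<in> Q"
  shows "e \<cdot> (a \<cdot> b) = (e \<cdot> b) \<cdot> (e \<cdot> a)"
proof -
  interpret D: group diamond by (rule group_diamond)
  have "e \<cdot> (a \<cdot> b) = inv\<^bsub>diamond\<^esub> (a \<cdot> b)"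
    using assms by (simp add: diamond_inv closed)
  also have "\<dots> = inv\<^bsub>diamond\<^esub> (inv\<^bsub>diamond\<^esub> a \<otimes>\<^bsub>diamond\<^esub> inv\<^bsub>diamond\<^esub> b)"
    using assms by (simp only: mult_eq_diamond_inv)
  also have "\<dots> = b \<otimes>\<^bsub>diamond\<^esub> a"
    using assms D.inv_closed by (simp add: D.inv_mult_group del: diamond_group_simps(3))
  finally show ?thesis by simp
qed

end

lemma modn_in_range: "0 < n \<Longrightarrow> modn n i \<in> {1..n}"
  by (auto simp: modn_def)

lemma modn_eq_self: "i \<in> {1..n} \<Longrightarrow> modn n i = i"
  by (cases "i = n") (auto simp: modn_def)

lemma modn_mod: "0 < n \<Longrightarrow> modn n i mod n = i mod n"
  by (simp add: modn_def)

lemma modn_eq_iff: "0 < n \<Longrightarrow> modn n i = modn n j \<longleftrightarrow> i mod n = j mod n"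
  by (metis modn_def modn_mod)

lemma modn_add_modn: "0 < n \<Longrightarrow> modn n (modn n i + j) = modn n (i + j)"
  unfolding modn_eq_iff by (metis mod_add_left_eq modn_mod)

lemma modn_add_self: "i \<in> {1..n} \<Longrightarrow> modn n (i + n) = i"
  using modn_eq_iff[of n "i + n" i] modn_eq_self[of i n] by auto

locale translatable_double_ward_quasigroup =
  double_ward_quasigroup "{1..n}" mult e for n :: nat and mult (infixl \<open>\<cdot>\<close> 70) and e +
  fixes k :: nat
  assumes translatable: "translatable n (\<cdot>) k"
begin

lemma order_pos: "0 < n"
  using unit_closed by simp

lemma translate: "i \<in> {1..n} \<Longrightarrow> j \<in> {1..n} \<Longrightarrow> i \<cdot> j = modn n (i + 1) \<cdot> modn n (j + k)"
  using translatable unfolding translatable_def by blast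

lemma translatable_index_eq:
  assumes "1 \<le> k" "k < n"
  shows "k = n - 1"
proof -
  define y where "y = modn n (e + (n - k))"
  have y: "y \<in> {1..n}" and g: "modn n (e + 1) \<in> {1..n}"
    using modn_in_range order_pos unfolding y_def by blast+
  have "modn n (y + k) = modn n (e + n)"
    using assms order_pos by (simp add: y_def modn_add_modn)
  also have "\<dots> = e" using modn_add_self unit_closed .
  finally have "e \<cdot> y = modn n (e + 1) \<cdot> e" using translate[OF unit_closed y] by simp
  also have "\<dots> = e \<cdot> modn n (e + 1)" by (rule mult_unit_commute[OF g])
  finally have "y = modn n (e + 1)" by (rule left_cancel[OF unit_closed y g])
  then have "[e + (n - k) = e + 1] (mod n)" unfolding y_def modn_eq_iff[OF order_pos] cong_def .
  then have "[n - k = 1] (mod n)" by (simp only: cong_add_lcancel_nat)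
  then show ?thesis using assms by (simp add: cong_def)
qed

lemma translate_successor:
  assumes "k = n - 1" "i \<in> {1..n}" "j \<in> {1..n}"
  shows "modn n (i + 1) \<cdot> j = i \<cdot> modn n (j + 1)"
proof -
  have "modn n (modn n (j + 1) + k) = modn n (j + 1 + k)" using modn_add_modn[OF order_pos] .
  also have "j + 1 + k = j + n" using assms(1) order_pos by simp
  also have "modn n (j + n) = j" using modn_add_self assms(3) .
  finally show ?thesis using translate[OF assms(2) modn_in_range[OF order_pos]] by simp
qed

lemma diamond_mult_successor:
  assumes "k = n - 1" "x \<in> {1..n}"
  shows "x \<otimes>\<^bsub>diamond\<^esub> modn n (e + 1) = modn n (x + 1)"
proof -
  have g: "modn n (e + 1) \<in> {1..n}" and x': "modn n (x + 1) \<in> {1..n}"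
    using modn_in_range order_pos by blast+
  have "x \<otimes>\<^bsub>diamond\<^esub> modn n (e + 1) = e \<cdot> (modn n (e + 1) \<cdot> x)"
    unfolding diamond_group_simps(3) by (rule unit_mult_antihom[OF g assms(2), symmetric])
  also have "modn n (e + 1) \<cdot> x = e \<cdot> modn n (x + 1)"
    by (rule translate_successor[OF assms(1) unit_closed assms(2)])
  also have "e \<cdot> (e \<cdot> modn n (x + 1)) = modn n (x + 1)"
    by (rule unit_involution[OF x'])
  finally show ?thesis .
qed

lemma diamond_pow_successor:
  assumes "k = n - 1"
  shows "modn n (e + 1) [^]\<^bsub>diamond\<^esub> m = modn n (e + m)"
proof (induction m)
  case 0
  show ?case using modn_eq_self[OF unit_closed] by simp
next
  case (Suc m)
  have "modn n (e + 1) [^]\<^bsub>diamond\<^esub> Suc m = modn n (e + m) \<otimes>\<^bsub>diamond\<^esub> modn n (e + 1)"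
    using Suc.IH by (simp only: nat_pow_Suc)
  also have "\<dots> = modn n (modn n (e + m) + 1)"
    using diamond_mult_successor[OF assms modn_in_range[OF order_pos]] .
  also have "\<dots> = modn n (e + m + 1)"
    by (rule modn_add_modn[OF order_pos])
  finally show ?case by simp
qed

lemma cyclic_diamond:
  assumes "k = n - 1"
  shows "cyclic_group diamond"
proof -
  interpret D: group diamond by (rule group_diamond)
  let ?g = "modn n (e + 1)"
  have "x \<in> range (\<lambda>m::int. ?g [^]\<^bsub>diamond\<^esub> m)" if x: "x \<in> {1..n}" for x
  proof
    have "e \<le> x + n" using unit_closed by simp
    then have "?g [^]\<^bsub>diamond\<^esub> int (x + n - e) = modn n (x + n)"
      unfolding int_pow_int diamond_pow_successor[OF assms] by simp
    then show "x = ?g [^]\<^bsub>diamond\<^esub> int (x + n - e)"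
      unfolding modn_add_self[OF x] by (rule sym)
  qed simp
  then have "carrier diamond = range (\<lambda>m::int. ?g [^]\<^bsub>diamond\<^esub> m)"
    using D.int_pow_closed modn_in_range[OF order_pos] by auto
  moreover have "?g \<in> carrier diamond" using modn_in_range[OF order_pos] by simp
  ultimately show ?thesis unfolding D.cyclic_group by blast
qed

end

theorem theorem4p14:
  fixes n k e :: nat and f :: "nat \<Rightarrow> nat \<Rightarrow> nat"
  assumes "double_ward {1..n} f e"
    and "1 \<le> k" and "k < n"
    and "translatable n f k"
  shows "k = n - 1 \<and> group (diamond_group {1..n} f e) \<and> cyclic_group (diamond_group {1..n} f e)"
proof -
  interpret translatable_double_ward_quasigroup n f e k
    using assms(1,4) double_ward_quasigroupI
    by (simp add: translatable_double_ward_quasigroup_def translatable_double_ward_quasigroup_axioms_def)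
  have "k = n - 1" using translatable_index_eq assms(2,3) .
  then show ?thesis using group_diamond cyclic_diamond by blast
qed

end
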